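(* Let $n\ge 2$. Suppose $\{a_i\}_{i=1}^k$ is a tight frame set for $\mathcal{H}_n$ and $b\ge 0$. Let $m=\max_{i=2,\dots,k}a_i^2$. Then $\{b,a_2,\dots,a_k\}$ is a tight frame set for $\mathcal{H}_n$ if and only if $$b^2\in\Big[\,nm-\sum_{i=2}^k a_i^2,\ \frac{1}{n-1}\sum_{i=2}^k a_i^2\,\Big].$$
   Context: $\mathcal{H}_n$ is an $n$-dimensional real or complex Hilbert space. A sequence of nonnegative numbers $\{a_i\}_{i=1}^k$ is a tight frame set for $\mathcal{H}_n$ if there exists a tight frame $\{f_i\}_{i=1}^k$ for $\mathcal{H}_n$ (i.e. vectors with $\sum_i|\langle f,f_i\rangle|^2=\lambda\|f\|^2$ for all $f$, for some $\lambda>0$) with $\|f_i\|=a_i$ for all $i$. *)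

theory Defs
  imports "HOL-Analysis.Analysis"
begin

text \<open>H_n is modelled as real^'n (real case) or complex^'n (complex case),
  with n = CARD('n). Sequences are indexed by 1..k.\<close>

definition tight_frame_real :: "(nat \<Rightarrow> real^'n) \<Rightarrow> nat \<Rightarrow> bool" where
  "tight_frame_real f k \<longleftrightarrow>
     (\<exists>c>0. \<forall>x::real^'n. (\<Sum>i=1..k. (x \<bullet> f i)\<^sup>2) = c * (norm x)\<^sup>2)"

definition cinner_vec :: "complex^'n \<Rightarrow> complex^'n \<Rightarrow> complex" where
  "cinner_vec x y = (\<Sum>j\<in>UNIV. x $ j * cnj (y $ j))"

definition tight_frame_complex :: "(nat \<Rightarrow> complex^'n) \<Rightarrow> nat \<Rightarrow> bool" where
  "tight_frame_complex f k \<longleftrightarrow>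
     (\<exists>c>0. \<forall>x::complex^'n. (\<Sum>i=1..k. (cmod (cinner_vec x (f i)))\<^sup>2) = c * (norm x)\<^sup>2)"

definition tight_frame_set_real :: "('n::finite) itself \<Rightarrow> nat \<Rightarrow> (nat \<Rightarrow> real) \<Rightarrow> bool" where
  "tight_frame_set_real _ k a \<longleftrightarrow> (\<forall>i\<in>{1..k}. 0 \<le> a i) \<and>
     (\<exists>f::nat \<Rightarrow> real^'n. tight_frame_real f k \<and> (\<forall>i\<in>{1..k}. norm (f i) = a i))"

definition tight_frame_set_complex :: "('n::finite) itself \<Rightarrow> nat \<Rightarrow> (nat \<Rightarrow> real) \<Rightarrow> bool" where
  "tight_frame_set_complex _ k a \<longleftrightarrow> (\<forall>i\<in>{1..k}. 0 \<le> a i) \<and>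
     (\<exists>f::nat \<Rightarrow> complex^'n. tight_frame_complex f k \<and> (\<forall>i\<in>{1..k}. norm (f i) = a i))"

end

theory Submission
  imports Defs
begin

text \<open>Norms \<open>a\<^sub>1, \<dots>, a\<^sub>k\<close> are those of a tight frame of \<open>\<real>\<^sup>n\<close> (or \<open>\<complex>\<^sup>n\<close>) iff
  \<open>\<Sum>\<^sub>j a\<^sub>j\<^sup>2 > 0\<close> and \<open>n a\<^sub>i\<^sup>2 \<le> \<Sum>\<^sub>j a\<^sub>j\<^sup>2\<close> for every \<open>i\<close>; replacing \<open>a\<^sub>1\<close> by \<open>b\<close> in this criterion
  gives exactly the stated interval. Necessity: the trace of the frame operator \<open>c\<cdot>id\<close> shows
  \<open>\<Sum>\<^sub>j a\<^sub>j\<^sup>2 = n c\<close>, and the frame identity at \<open>f\<^sub>i\<close> gives \<open>a\<^sub>i\<^sup>4 \<le> c a\<^sub>i\<^sup>2\<close>. Sufficiency, by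
  induction on the number of vectors: two weights with sum \<open>\<le> c\<close> are merged into one vector,
  which is afterwards split into two parallel ones; two weights with sum \<open>> c\<close> are replaced by
  their excess \<open>a\<^sub>i\<^sup>2 + a\<^sub>j\<^sup>2 - c\<close> in the orthogonal complement of a unit vector \<open>e\<close>, and the two
  vectors are then rebuilt inside \<open>span {e, g\<^sub>i}\<close>. A real tight frame is also a complex one.\<close>

definition tight_frame_on :: "'a::real_inner set \<Rightarrow> 'b set \<Rightarrow> ('b \<Rightarrow> 'a) \<Rightarrow> real \<Rightarrow> bool" where
  "tight_frame_on V I f c \<longleftrightarrow> (\<forall>x\<in>V. (\<Sum>i\<in>I. (x \<bullet> f i)\<^sup>2) = c * (norm x)\<^sup>2)"

definition tight_frame_with_sq_norms ::
    "'a::real_inner set \<Rightarrow> 'b set \<Rightarrow> ('b \<Rightarrow> 'a) \<Rightarrow> real \<Rightarrow> ('b \<Rightarrow> real) \<Rightarrow> bool" where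
  "tight_frame_with_sq_norms V I f c w \<longleftrightarrow>
     (\<forall>i\<in>I. f i \<in> V \<and> (norm (f i))\<^sup>2 = w i) \<and> tight_frame_on V I f c"

lemma sum_remove_two:
  assumes "finite I" "i \<in> I" "j \<in> I" "i \<noteq> j"
  shows "sum F I = F i + F j + sum F (I - {i, j})"
proof -
  have "sum F I = F i + sum F (I - {i})" using assms by (simp add: sum.remove)
  also have "sum F (I - {i}) = F j + sum F (I - {i} - {j})" using assms by (simp add: sum.remove)
  finally show ?thesis by (simp add: Diff_insert2[symmetric] insert_commute add.assoc)
qed

lemma sum_fun_upd_pair:
  assumes "finite I" "i \<in> I" "j \<in> I" "i \<noteq> j"
  shows "(\<Sum>h\<in>I. F ((g(i := u, j := v)) h)) + F (g i) = F u + F v + (\<Sum>h\<in>I - {j}. F (g h))"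
proof -
  have "(\<Sum>h\<in>I - {i, j}. F ((g(i := u, j := v)) h)) = (\<Sum>h\<in>I - {i, j}. F (g h))"
    by (intro sum.cong) auto
  moreover have "(\<Sum>h\<in>I - {j}. F (g h)) = F (g i) + (\<Sum>h\<in>I - {i, j}. F (g h))"
    using assms by (simp add: sum.remove Diff_insert2[symmetric] insert_commute)
  ultimately show ?thesis
    using sum_remove_two[OF assms, of "\<lambda>h. F ((g(i := u, j := v)) h)"] assms by (simp add: ac_simps)
qed

lemma inner_sq_eq_norm_sq_mult_sgn:
  fixes x v :: "'a::real_inner"
  shows "(x \<bullet> v)\<^sup>2 = (norm v)\<^sup>2 * (x \<bullet> sgn v)\<^sup>2"
  by (cases "v = 0") (simp_all add: sgn_div_norm power_mult_distrib field_simps)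

lemma norm_scaleR_sgn_sq:
  fixes v :: "'a::real_normed_vector"
  assumes "r\<^sup>2 \<le> (norm v)\<^sup>2"
  shows "(norm (r *\<^sub>R sgn v))\<^sup>2 = r\<^sup>2"
  using assms by (cases "v = 0") (simp_all add: norm_sgn power_mult_distrib)

lemma tight_frame_on_split_vector:
  fixes g :: "'b \<Rightarrow> 'a::real_inner"
  assumes "finite I" "i \<in> I" "j \<in> I" "i \<noteq> j" and g: "tight_frame_on V (I - {j}) g c"
    and "0 \<le> a" "0 \<le> b" and gi: "(norm (g i))\<^sup>2 = a + b"
  shows "tight_frame_on V I (g(i := sqrt a *\<^sub>R sgn (g i), j := sqrt b *\<^sub>R sgn (g i))) c"
  unfolding tight_frame_on_def
proof
  fix x assume "x \<in> V"
  have "(x \<bullet> (sqrt a *\<^sub>R sgn (g i)))\<^sup>2 + (x \<bullet> (sqrt b *\<^sub>R sgn (g i)))\<^sup>2 = (x \<bullet> g i)\<^sup>2"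
    using \<open>0 \<le> a\<close> \<open>0 \<le> b\<close> gi inner_sq_eq_norm_sq_mult_sgn[of x "g i"]
    by (simp add: power_mult_distrib algebra_simps)
  moreover have "(\<Sum>h\<in>I - {j}. (x \<bullet> g h)\<^sup>2) = c * (norm x)\<^sup>2"
    using g \<open>x \<in> V\<close> by (simp add: tight_frame_on_def)
  ultimately show "(\<Sum>h\<in>I. (x \<bullet> (g(i := sqrt a *\<^sub>R sgn (g i), j := sqrt b *\<^sub>R sgn (g i))) h)\<^sup>2) = c * (norm x)\<^sup>2"
    using sum_fun_upd_pair[OF assms(1-4), of "\<lambda>v. (x \<bullet> v)\<^sup>2" g "sqrt a *\<^sub>R sgn (g i)" "sqrt b *\<^sub>R sgn (g i)"]
    by linarith
qed

lemma tight_frame_with_sq_norms_merge: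
  fixes g :: "'b \<Rightarrow> 'a::real_inner"
  assumes I: "finite I" "i \<in> I" "j \<in> I" "i \<noteq> j" and "subspace V"
    and g: "tight_frame_with_sq_norms V (I - {j}) g c (w(i := w i + w j))"
    and "0 \<le> w i" "0 \<le> w j"
  shows "tight_frame_with_sq_norms V I (g(i := sqrt (w i) *\<^sub>R sgn (g i), j := sqrt (w j) *\<^sub>R sgn (g i))) c w"
proof -
  have gi: "g i \<in> V" "(norm (g i))\<^sup>2 = w i + w j"
    and g_tight: "tight_frame_on V (I - {j}) g c"
    using g I by (auto simp: tight_frame_with_sq_norms_def)
  then have "sqrt (w i) *\<^sub>R sgn (g i) \<in> V" "sqrt (w j) *\<^sub>R sgn (g i) \<in> V"
    using \<open>subspace V\<close> by (simp_all add: sgn_div_norm subspace_scale)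
  moreover have "(norm (sqrt (w i) *\<^sub>R sgn (g i)))\<^sup>2 = w i" "(norm (sqrt (w j) *\<^sub>R sgn (g i)))\<^sup>2 = w j"
    using gi(2) \<open>0 \<le> w i\<close> \<open>0 \<le> w j\<close> norm_scaleR_sgn_sq[of "sqrt (w i)" "g i"]
      norm_scaleR_sgn_sq[of "sqrt (w j)" "g i"] by simp_all
  moreover have "tight_frame_on V I (g(i := sqrt (w i) *\<^sub>R sgn (g i), j := sqrt (w j) *\<^sub>R sgn (g i))) c"
    using tight_frame_on_split_vector[OF I g_tight \<open>0 \<le> w i\<close> \<open>0 \<le> w j\<close> gi(2)] .
  ultimately show ?thesis
    using g I by (auto simp: tight_frame_with_sq_norms_def)
qed

lemma span_insert_orthogonal_decomp:
  assumes x: "x \<in> span (insert e S)" and "norm e = 1" and e: "\<forall>v\<in>S. orthogonal e v"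
  shows "x - (x \<bullet> e) *\<^sub>R e \<in> span S"
proof -
  obtain t where t: "x - t *\<^sub>R e \<in> span S" using x span_breakdown_eq by blast
  then have "orthogonal e (x - t *\<^sub>R e)" using e orthogonal_to_span by blast
  then have "t = x \<bullet> e" using \<open>norm e = 1\<close>
    by (simp add: orthogonal_def inner_diff_right inner_commute norm_eq_1)
  then show ?thesis using t by simp
qed

lemma tight_frame_on_rotate_into:
  fixes g :: "'b \<Rightarrow> 'a::real_inner"
  assumes "finite I" "i \<in> I" "j \<in> I" "i \<noteq> j"
    and g: "tight_frame_on (span S) (I - {j}) g c" and g_span: "\<forall>h\<in>I - {j}. g h \<in> span S"
    and "norm e = 1" and e: "\<forall>v\<in>S. orthogonal e v"
    and x: "x1\<^sup>2 + x2\<^sup>2 = c" and y: "(norm (g i))\<^sup>2 = y1\<^sup>2 + y2\<^sup>2" and xy: "x1 * y1 = x2 * y2"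
  shows "tight_frame_on (span (insert e S)) I
           (g(i := x1 *\<^sub>R e + y1 *\<^sub>R sgn (g i), j := x2 *\<^sub>R e - y2 *\<^sub>R sgn (g i))) c"
  unfolding tight_frame_on_def
proof
  fix x assume "x \<in> span (insert e S)"
  define t where "t = x \<bullet> e"
  define z where "z = x - t *\<^sub>R e"
  have z: "z \<in> span S" using span_insert_orthogonal_decomp[OF \<open>x \<in> _\<close> \<open>norm e = 1\<close> e]
    by (simp add: z_def t_def)
  have e_perp: "e \<bullet> w = 0" if "w \<in> span S" for w
    using orthogonal_to_span[OF that, of e] e by (simp add: orthogonal_def)
  have x_dec: "x = t *\<^sub>R e + z" by (simp add: z_def)
  have x_inner: "x \<bullet> w = z \<bullet> w" if "w \<in> span S" for w
    using e_perp[OF that] by (simp add: x_dec inner_add_left)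
  have norm_x: "(norm x)\<^sup>2 = t\<^sup>2 + (norm z)\<^sup>2"
    using norm_add_Pythagorean[of "t *\<^sub>R e" z] e_perp[OF z] \<open>norm e = 1\<close>
    by (simp add: x_dec orthogonal_def power_mult_distrib)
  define \<sigma> where "\<sigma> = x \<bullet> sgn (g i)"
  have "(x \<bullet> (x1 *\<^sub>R e + y1 *\<^sub>R sgn (g i)))\<^sup>2 + (x \<bullet> (x2 *\<^sub>R e - y2 *\<^sub>R sgn (g i)))\<^sup>2
        = (t * x1 + y1 * \<sigma>)\<^sup>2 + (t * x2 - y2 * \<sigma>)\<^sup>2"
    by (simp add: t_def \<sigma>_def inner_add_right inner_diff_right algebra_simps)
  also have "\<dots> = t\<^sup>2 * (x1\<^sup>2 + x2\<^sup>2) + 2 * t * \<sigma> * (x1 * y1 - x2 * y2) + (y1\<^sup>2 + y2\<^sup>2) * \<sigma>\<^sup>2"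
    by (simp add: power2_eq_square algebra_simps)
  also have "\<dots> = c * t\<^sup>2 + (y1\<^sup>2 + y2\<^sup>2) * \<sigma>\<^sup>2"
    using x xy by simp
  also have "\<dots> = c * t\<^sup>2 + (x \<bullet> g i)\<^sup>2"
    using y inner_sq_eq_norm_sq_mult_sgn[of x "g i"] by (simp add: \<sigma>_def)
  finally have pair: "(x \<bullet> (x1 *\<^sub>R e + y1 *\<^sub>R sgn (g i)))\<^sup>2 + (x \<bullet> (x2 *\<^sub>R e - y2 *\<^sub>R sgn (g i)))\<^sup>2
        = c * t\<^sup>2 + (x \<bullet> g i)\<^sup>2" .
  have "(\<Sum>h\<in>I - {j}. (x \<bullet> g h)\<^sup>2) = c * (norm z)\<^sup>2"
    using g z g_span x_inner by (simp add: tight_frame_on_def)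
  moreover have "c * (norm x)\<^sup>2 = c * t\<^sup>2 + c * (norm z)\<^sup>2"
    using norm_x by (simp add: algebra_simps)
  ultimately show "(\<Sum>h\<in>I. (x \<bullet> (g(i := x1 *\<^sub>R e + y1 *\<^sub>R sgn (g i), j := x2 *\<^sub>R e - y2 *\<^sub>R sgn (g i))) h)\<^sup>2)
             = c * (norm x)\<^sup>2"
    using sum_fun_upd_pair[OF assms(1-4), of "\<lambda>v. (x \<bullet> v)\<^sup>2" g
        "x1 *\<^sub>R e + y1 *\<^sub>R sgn (g i)" "x2 *\<^sub>R e - y2 *\<^sub>R sgn (g i)"] pair
    by linarith
qed

text \<open>The rows \<open>(x1, y1)\<close> and \<open>(x2, -y2)\<close> will be the coordinates of the two rebuilt frame
  vectors along \<open>e\<close> and \<open>sgn g\<^sub>i\<close>: orthogonal columns of squared lengths \<open>c\<close> and \<open>a + b - c\<close>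
  keep the frame tight, and the rows have the prescribed squared lengths \<open>a\<close> and \<open>b\<close>.\<close>

lemma orthogonal_columns_2x2_exists:
  fixes a b c :: real
  assumes "0 \<le> a" "a \<le> c" "0 \<le> b" "b \<le> c" "c \<le> a + b"
  shows "\<exists>x1 x2 y1 y2. x1\<^sup>2 + x2\<^sup>2 = c \<and> y1\<^sup>2 + y2\<^sup>2 = a + b - c \<and>
           x1\<^sup>2 + y1\<^sup>2 = a \<and> x2\<^sup>2 + y2\<^sup>2 = b \<and> x1 * y1 = x2 * y2"
proof -
  \<comment> \<open>With \<open>p = x1\<^sup>2\<close> all squares are determined, and \<open>x1\<^sup>2 y1\<^sup>2 = x2\<^sup>2 y2\<^sup>2\<close> is linear in \<open>p\<close>;
    if \<open>2c = a + b\<close> then \<open>a = b = c\<close> and the junk value \<open>p = 0\<close> of the division works too.\<close>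
  define p where "p = c * (c - b) / (2 * c - a - b)"
  have p: "0 \<le> p \<and> p \<le> c \<and> p \<le> a \<and> c - b \<le> p \<and> p * (a - p) = (c - p) * (b - c + p)"
  proof (cases "2 * c - a - b = 0")
    case True
    then show ?thesis using assms by (simp add: p_def)
  next
    case False
    then have D: "0 < 2 * c - a - b" using assms by simp
    have "c * (c - b) \<le> a * (2 * c - a - b)"
      using mult_nonneg_nonneg[of "c - a" "a + b - c"] assms by (simp add: algebra_simps)
    moreover have "(c - b) * (2 * c - a - b) \<le> c * (c - b)"
      using mult_nonneg_nonneg[of "c - b" "a + b - c"] assms by (simp add: algebra_simps)
    ultimately have "0 \<le> p \<and> p \<le> c \<and> p \<le> a \<and> c - b \<le> p"
      using D assms by (simp add: p_def divide_le_eq le_divide_eq algebra_simps)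
    moreover have "p * (2 * c - a - b) = c * (c - b)"
      using D by (simp add: p_def)
    then have "p * (a - p) - (c - p) * (b - c + p) = 0"
      by (simp add: algebra_simps)
    ultimately show ?thesis by simp
  qed
  show ?thesis
  proof (intro exI conjI)
    show "(sqrt p)\<^sup>2 + (sqrt (c - p))\<^sup>2 = c"
      and "(sqrt (a - p))\<^sup>2 + (sqrt (b - c + p))\<^sup>2 = a + b - c"
      and "(sqrt p)\<^sup>2 + (sqrt (a - p))\<^sup>2 = a"
      and "(sqrt (c - p))\<^sup>2 + (sqrt (b - c + p))\<^sup>2 = b"
      using p by simp_all
    show "sqrt p * sqrt (a - p) = sqrt (c - p) * sqrt (b - c + p)"
      using p by (simp add: real_sqrt_mult[symmetric])
  qed
qed

lemma norm_sq_add_orthogonal_sgn: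
  fixes e v :: "'a::real_inner"
  assumes "norm e = 1" "orthogonal e v" "r\<^sup>2 \<le> (norm v)\<^sup>2"
  shows "(norm (s *\<^sub>R e + r *\<^sub>R sgn v))\<^sup>2 = s\<^sup>2 + r\<^sup>2"
proof -
  have "orthogonal (s *\<^sub>R e) (r *\<^sub>R sgn v)"
    using assms(2) by (simp add: sgn_div_norm orthogonal_clauses)
  then have "(norm (s *\<^sub>R e + r *\<^sub>R sgn v))\<^sup>2 = (norm (s *\<^sub>R e))\<^sup>2 + (norm (r *\<^sub>R sgn v))\<^sup>2"
    by (rule norm_add_Pythagorean)
  then show ?thesis
    using norm_scaleR_sgn_sq[OF assms(3)] assms(1) by (simp add: power_mult_distrib)
qed

lemma tight_frame_with_sq_norms_rotate:
  fixes g :: "'b \<Rightarrow> 'a::real_inner"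
  assumes I: "finite I" "i \<in> I" "j \<in> I" "i \<noteq> j"
    and g: "tight_frame_with_sq_norms (span S) (I - {j}) g c (w(i := w i + w j - c))"
    and "norm e = 1" and e: "\<forall>v\<in>S. orthogonal e v"
    and x: "x1\<^sup>2 + x2\<^sup>2 = c" and y: "y1\<^sup>2 + y2\<^sup>2 = w i + w j - c"
    and rows: "x1\<^sup>2 + y1\<^sup>2 = w i" "x2\<^sup>2 + y2\<^sup>2 = w j" and xy: "x1 * y1 = x2 * y2"
  shows "tight_frame_with_sq_norms (span (insert e S)) I
           (g(i := x1 *\<^sub>R e + y1 *\<^sub>R sgn (g i), j := x2 *\<^sub>R e - y2 *\<^sub>R sgn (g i))) c w"
proof -
  have g_span: "\<forall>h\<in>I - {j}. g h \<in> span S" and g_tight: "tight_frame_on (span S) (I - {j}) g c"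
    using g by (simp_all add: tight_frame_with_sq_norms_def)
  have gi: "g i \<in> span S" "(norm (g i))\<^sup>2 = y1\<^sup>2 + y2\<^sup>2"
    using g I y by (auto simp: tight_frame_with_sq_norms_def)
  have e_gi: "orthogonal e (g i)" using orthogonal_to_span[OF gi(1)] e by blast
  have "y1\<^sup>2 \<le> (norm (g i))\<^sup>2" "(- y2)\<^sup>2 \<le> (norm (g i))\<^sup>2"
    unfolding power2_minus using gi(2) zero_le_power2[of y1] zero_le_power2[of y2] by linarith+
  from this[THEN norm_sq_add_orthogonal_sgn[OF \<open>norm e = 1\<close> e_gi]]
  have "(norm (x1 *\<^sub>R e + y1 *\<^sub>R sgn (g i)))\<^sup>2 = w i" "(norm (x2 *\<^sub>R e - y2 *\<^sub>R sgn (g i)))\<^sup>2 = w j"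
    using rows by simp_all
  moreover have "span S \<subseteq> span (insert e S)" by (simp add: span_mono subset_insertI)
  moreover have "x1 *\<^sub>R e + y1 *\<^sub>R sgn (g i) \<in> span (insert e S)"
    "x2 *\<^sub>R e - y2 *\<^sub>R sgn (g i) \<in> span (insert e S)"
    using gi(1) calculation(3)
    by (auto simp: span_base sgn_div_norm intro!: span_add span_diff span_scale)
  moreover have "tight_frame_on (span (insert e S)) I
      (g(i := x1 *\<^sub>R e + y1 *\<^sub>R sgn (g i), j := x2 *\<^sub>R e - y2 *\<^sub>R sgn (g i))) c"
    using tight_frame_on_rotate_into[OF I g_tight g_span \<open>norm e = 1\<close> e x gi(2) xy] .
  ultimately show ?thesis
    using g I by (auto simp: tight_frame_with_sq_norms_def)
qed

lemma sum_fun_upd_merge: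
  assumes "finite I" "i \<in> I" "j \<in> I" "i \<noteq> j"
  shows "sum (w(i := w i + w j + r)) (I - {j}) = sum w I + r"
proof -
  have "sum (w(i := w i + w j + r)) (I - {j}) = w i + w j + r + sum w (I - {i, j})"
    using assms by (simp add: sum.remove Diff_insert2[symmetric] insert_commute)
  then show ?thesis using sum_remove_two[OF assms, of w] by (simp add: ac_simps)
qed

lemma tight_frame_with_sq_norms_at_most_one:
  fixes B :: "'a::real_inner set" and w :: "'b \<Rightarrow> real"
  assumes "finite B" "\<forall>u\<in>B. norm u = 1" and I: "\<forall>i\<in>I. \<forall>j\<in>I. i = j"
    and "\<forall>i\<in>I. 0 \<le> w i \<and> w i \<le> c" "0 < c" "sum w I = real (card B) * c"
  shows "\<exists>f. tight_frame_with_sq_norms (span B) I f c w"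
proof (cases "I = {}")
  case True
  then have "B = {}" using assms by simp
  then show ?thesis using True by (simp add: tight_frame_with_sq_norms_def tight_frame_on_def)
next
  case False
  then obtain i where i: "I = {i}" using I by blast
  then have "real (card B) * c \<le> 1 * c" using assms by simp
  then have "card B \<le> 1" using \<open>0 < c\<close> by (simp add: mult_le_cancel_right)
  then consider "B = {}" | e where "B = {e}" by (metis card_le_Suc0_iff_eq \<open>finite B\<close> One_nat_def insertI1
        subsetI subset_singletonD)
  then show ?thesis
  proof cases
    case 1
    then show ?thesis using i assms by (intro exI[of _ "\<lambda>_. 0"]) (simp add: tight_frame_with_sq_norms_def tight_frame_on_def)
  next
    case 2
    have "norm e = 1" using 2 assms by simp
    then have ee: "e \<bullet> e = 1" by (simp add: norm_eq_1)
    have "(x \<bullet> (sqrt c *\<^sub>R e))\<^sup>2 = c * (norm x)\<^sup>2" if "x \<in> span B" for x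
    proof -
      from that 2 obtain t where "x = t *\<^sub>R e" by (auto simp: span_singleton)
      then show ?thesis using ee \<open>norm e = 1\<close> \<open>0 < c\<close> by (simp add: power_mult_distrib)
    qed
    then show ?thesis using i 2 assms
      by (intro exI[of _ "\<lambda>_. sqrt c *\<^sub>R e"]) (simp add: tight_frame_with_sq_norms_def tight_frame_on_def span_base span_scale)
  qed
qed

lemma tight_frame_with_sq_norms_exists:
  fixes B :: "'a::real_inner set" and w :: "'b \<Rightarrow> real"
  assumes "finite B" "pairwise orthogonal B" "\<forall>u\<in>B. norm u = 1"
    and "finite I" "\<forall>i\<in>I. 0 \<le> w i \<and> w i \<le> c" "0 < c" "sum w I = real (card B) * c"
  shows "\<exists>f. tight_frame_with_sq_norms (span B) I f c w"
  using assms
proof (induction "card I" arbitrary: I B w rule: less_induct)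
  case less
  note B = less.prems(1-3) and I = less.prems(4) and w = less.prems(5) and c = less.prems(6)
    and sum_w = less.prems(7)
  consider "\<forall>i\<in>I. \<forall>j\<in>I. i = j"
    | (merge) i j where "i \<in> I" "j \<in> I" "i \<noteq> j" "w i + w j \<le> c"
    | (rotate) i j where "i \<in> I" "j \<in> I" "i \<noteq> j" "c < w i + w j"
    by fastforce
  then show ?case
  proof cases
    case 1
    show ?thesis using tight_frame_with_sq_norms_at_most_one[OF B(1,3) 1 w c sum_w] .
  next
    case merge
    have "card (I - {j}) < card I" using merge I by (meson card_Diff1_less)
    moreover have "\<forall>h\<in>I - {j}. 0 \<le> (w(i := w i + w j)) h \<and> (w(i := w i + w j)) h \<le> c"
      using w merge by auto
    moreover have "sum (w(i := w i + w j)) (I - {j}) = real (card B) * c"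
      using sum_fun_upd_merge[OF I merge(1-3), of w 0] sum_w by simp
    ultimately obtain g where "tight_frame_with_sq_norms (span B) (I - {j}) g c (w(i := w i + w j))"
      using less.hyps[OF _ B finite_Diff[OF I] _ c] by blast
    then show ?thesis
      using tight_frame_with_sq_norms_merge[OF I merge(1-3) subspace_span] w merge by blast
  next
    case rotate
    have wij: "0 \<le> w i" "w i \<le> c" "0 \<le> w j" "w j \<le> c" using w rotate by auto
    have "B \<noteq> {}"
    proof
      assume "B = {}"
      then have "w i = 0" "w j = 0" using sum_w w I rotate sum_nonneg_eq_0_iff[OF I, of w] by auto
      then show False using rotate c by simp
    qed
    then obtain e where e: "e \<in> B" by blast
    define B' where "B' = B - {e}"
    have B': "finite B'" "pairwise orthogonal B'" "\<forall>u\<in>B'. norm u = 1"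
      using B by (auto simp: B'_def pairwise_def)
    have "card B = Suc (card B')" using card.remove[OF B(1) e] by (simp add: B'_def)
    then have "sum (w(i := w i + w j - c)) (I - {j}) = real (card B') * c"
      using sum_fun_upd_merge[OF I rotate(1-3), of w "- c"] sum_w by (simp add: algebra_simps)
    moreover have "w i + w j - c \<le> c" using wij by linarith
    then have "\<forall>h\<in>I - {j}. 0 \<le> (w(i := w i + w j - c)) h \<and> (w(i := w i + w j - c)) h \<le> c"
      using w rotate by auto
    moreover have "card (I - {j}) < card I" using rotate I by (meson card_Diff1_less)
    ultimately obtain g where g: "tight_frame_with_sq_norms (span B') (I - {j}) g c (w(i := w i + w j - c))"
      using less.hyps[OF _ B' finite_Diff[OF I] _ c] by blast
    obtain x1 x2 y1 y2 where "x1\<^sup>2 + x2\<^sup>2 = c" "y1\<^sup>2 + y2\<^sup>2 = w i + w j - c"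
      "x1\<^sup>2 + y1\<^sup>2 = w i" "x2\<^sup>2 + y2\<^sup>2 = w j" "x1 * y1 = x2 * y2"
      using orthogonal_columns_2x2_exists[of "w i" c "w j"] wij rotate by auto
    moreover have "norm e = 1" "\<forall>v\<in>B'. orthogonal e v" "B = insert e B'"
      using B e by (auto simp: B'_def pairwise_def)
    ultimately show ?thesis
      using tight_frame_with_sq_norms_rotate[OF I rotate(1-3) g] by metis
  qed
qed

lemma euclidean_tight_frame_with_norms_exists:
  fixes a :: "'b \<Rightarrow> real"
  assumes "finite I" "\<forall>i\<in>I. 0 \<le> a i" and pos: "0 < (\<Sum>i\<in>I. (a i)\<^sup>2)"
    and bound: "\<forall>i\<in>I. real DIM('a) * (a i)\<^sup>2 \<le> (\<Sum>i\<in>I. (a i)\<^sup>2)"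
  shows "\<exists>(f :: 'b \<Rightarrow> 'a::euclidean_space) c. 0 < c \<and>
           (\<forall>x. (\<Sum>i\<in>I. (x \<bullet> f i)\<^sup>2) = c * (norm x)\<^sup>2) \<and> (\<forall>i\<in>I. norm (f i) = a i)"
proof -
  define c where "c = (\<Sum>i\<in>I. (a i)\<^sup>2) / real DIM('a)"
  have "0 < c" using pos by (simp add: c_def)
  moreover have "\<forall>i\<in>I. 0 \<le> (a i)\<^sup>2 \<and> (a i)\<^sup>2 \<le> c"
    using bound by (simp add: c_def le_divide_eq mult.commute)
  moreover have "(\<Sum>i\<in>I. (a i)\<^sup>2) = real (card (Basis :: 'a set)) * c"
    by (simp add: c_def)
  ultimately obtain f :: "'b \<Rightarrow> 'a" where
    f: "\<forall>i\<in>I. f i \<in> span Basis \<and> (norm (f i))\<^sup>2 = (a i)\<^sup>2" and "tight_frame_on (span Basis) I f c"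
    using tight_frame_with_sq_norms_exists[of "Basis :: 'a set" I "\<lambda>i. (a i)\<^sup>2" c] \<open>finite I\<close>
    by (auto simp: orthogonal_Basis tight_frame_with_sq_norms_def)
  then show ?thesis
    using \<open>0 < c\<close> assms(2) by (intro exI conjI) (auto simp: tight_frame_on_def power2_eq_iff_nonneg)
qed

lemma tight_frame_sum_norm_sq:
  fixes ip :: "'v::real_normed_vector \<Rightarrow> 'v \<Rightarrow> 'k::real_normed_vector" and u :: "'l \<Rightarrow> 'v"
  assumes frame: "\<forall>x. (\<Sum>i\<in>I. (norm (ip x (f i)))\<^sup>2) = c * (norm x)\<^sup>2"
    and parseval: "\<forall>y. (norm y)\<^sup>2 = (\<Sum>l\<in>L. (norm (ip (u l) y))\<^sup>2)"
    and unit: "\<forall>l\<in>L. norm (u l) = 1"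
  shows "(\<Sum>i\<in>I. (norm (f i))\<^sup>2) = real (card L) * c"
proof -
  have "(\<Sum>i\<in>I. (norm (f i))\<^sup>2) = (\<Sum>i\<in>I. \<Sum>l\<in>L. (norm (ip (u l) (f i)))\<^sup>2)"
    using parseval by simp
  also have "\<dots> = (\<Sum>l\<in>L. \<Sum>i\<in>I. (norm (ip (u l) (f i)))\<^sup>2)"
    by (rule sum.swap)
  also have "\<dots> = (\<Sum>l\<in>L. c)"
    using frame unit by simp
  finally show ?thesis by simp
qed

lemma tight_frame_norm_sq_le:
  fixes ip :: "'v::real_normed_vector \<Rightarrow> 'v \<Rightarrow> 'k::real_normed_vector"
  assumes frame: "\<forall>x. (\<Sum>i\<in>I. (norm (ip x (f i)))\<^sup>2) = c * (norm x)\<^sup>2"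
    and self: "\<forall>y. norm (ip y y) = (norm y)\<^sup>2"
    and "finite I" "j \<in> I" "0 \<le> c"
  shows "(norm (f j))\<^sup>2 \<le> c"
proof -
  have "(norm (f j))\<^sup>2 * (norm (f j))\<^sup>2 = (norm (ip (f j) (f j)))\<^sup>2"
    using self by (simp add: power2_eq_square)
  also have "\<dots> \<le> (\<Sum>i\<in>I. (norm (ip (f j) (f i)))\<^sup>2)"
    using assms(3,4) by (intro member_le_sum) auto
  also have "\<dots> = c * (norm (f j))\<^sup>2"
    using frame by simp
  finally have le: "(norm (f j))\<^sup>2 * (norm (f j))\<^sup>2 \<le> c * (norm (f j))\<^sup>2" .
  show ?thesis
  proof (cases "f j = 0")
    case False
    then show ?thesis using mult_right_le_imp_le[OF le] by simp
  qed (use \<open>0 \<le> c\<close> in simp)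
qed

definition admissible_frame_norms :: "nat \<Rightarrow> nat \<Rightarrow> (nat \<Rightarrow> real) \<Rightarrow> bool" where
  "admissible_frame_norms n k a \<longleftrightarrow> (\<forall>i\<in>{1..k}. 0 \<le> a i) \<and> 0 < (\<Sum>i=1..k. (a i)\<^sup>2) \<and>
     (\<forall>i\<in>{1..k}. real n * (a i)\<^sup>2 \<le> (\<Sum>i=1..k. (a i)\<^sup>2))"

lemma admissible_frame_norms_if_tight:
  fixes ip :: "'v::real_normed_vector \<Rightarrow> 'v \<Rightarrow> 'k::real_normed_vector" and u :: "'l \<Rightarrow> 'v"
  assumes frame: "\<forall>x. (\<Sum>i=1..k. (norm (ip x (f i)))\<^sup>2) = c * (norm x)\<^sup>2" and "0 < c"
    and parseval: "\<forall>y. (norm y)\<^sup>2 = (\<Sum>l\<in>L. (norm (ip (u l) y))\<^sup>2)"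
    and unit: "\<forall>l\<in>L. norm (u l) = 1" and self: "\<forall>y. norm (ip y y) = (norm y)\<^sup>2"
    and "card L = n" "0 < n" and norms: "\<forall>i\<in>{1..k}. norm (f i) = a i"
  shows "admissible_frame_norms n k a"
proof -
  have "(\<Sum>i=1..k. (a i)\<^sup>2) = real n * c"
    using tight_frame_sum_norm_sq[OF frame parseval unit] norms \<open>card L = n\<close> by simp
  moreover have "\<forall>i\<in>{1..k}. (a i)\<^sup>2 \<le> c"
    using tight_frame_norm_sq_le[OF frame self] norms \<open>0 < c\<close> by fastforce
  moreover have "\<forall>i\<in>{1..k}. 0 \<le> a i"
    using norms by (metis norm_ge_zero)
  ultimately show ?thesis
    using \<open>0 < c\<close> \<open>0 < n\<close> by (auto simp: admissible_frame_norms_def)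
qed

lemma norm_vec_sq:
  fixes x :: "'a::real_normed_vector^'n"
  shows "(norm x)\<^sup>2 = (\<Sum>j\<in>UNIV. (norm (x $ j))\<^sup>2)"
  unfolding norm_vec_def L2_set_def by (simp add: sum_nonneg)

lemma norm_axis: "norm (axis i (x :: 'a::real_normed_vector)) = norm x"
proof -
  have "(norm (axis i x))\<^sup>2 = (\<Sum>j\<in>UNIV. if j = i then (norm x)\<^sup>2 else 0)"
    unfolding norm_vec_sq by (intro sum.cong) (auto simp: axis_def)
  then show ?thesis by (simp add: power2_eq_iff_nonneg)
qed

lemma cinner_vec_self: "cinner_vec x x = complex_of_real ((norm x)\<^sup>2)"
  unfolding cinner_vec_def norm_vec_sq by (simp add: complex_norm_square[symmetric])

lemma cinner_vec_axis_left: "cinner_vec (axis l 1) y = cnj (y $ l)"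
proof -
  have "cinner_vec (axis l 1) y = (\<Sum>j\<in>UNIV. if j = l then cnj (y $ j) else 0)"
    unfolding cinner_vec_def axis_def by (intro sum.cong) auto
  then show ?thesis by simp
qed

lemma tight_frame_complex_of_real:
  fixes f :: "'b \<Rightarrow> real^'n" and x :: "complex^'n"
  assumes frame: "\<forall>x. (\<Sum>i\<in>I. (x \<bullet> f i)\<^sup>2) = c * (norm x)\<^sup>2"
  shows "(\<Sum>i\<in>I. (cmod (cinner_vec x (\<chi> j. complex_of_real (f i $ j))))\<^sup>2) = c * (norm x)\<^sup>2"
proof -
  define xr :: "real^'n" where "xr = (\<chi> j. Re (x $ j))"
  define xi :: "real^'n" where "xi = (\<chi> j. Im (x $ j))"
  \<comment> \<open>Against a real vector, the real and imaginary parts of \<open>x\<close> contribute separately.\<close>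
  have "(cmod (cinner_vec x (\<chi> j. complex_of_real (f i $ j))))\<^sup>2 = (xr \<bullet> f i)\<^sup>2 + (xi \<bullet> f i)\<^sup>2" for i
    by (simp add: cmod_power2 cinner_vec_def xr_def xi_def inner_vec_def Re_sum Im_sum)
  moreover have "(norm x)\<^sup>2 = (norm xr)\<^sup>2 + (norm xi)\<^sup>2"
    unfolding norm_vec_sq by (simp add: xr_def xi_def cmod_power2 sum.distrib)
  ultimately show ?thesis
    using frame by (simp add: sum.distrib algebra_simps)
qed

lemma norm_vec_complex_of_real: "norm (\<chi> j. complex_of_real (v $ j)) = norm (v :: real^'n)"
proof -
  have "(norm (\<chi> j. complex_of_real (v $ j)))\<^sup>2 = (norm v)\<^sup>2"
    unfolding norm_vec_sq by simp
  then show ?thesis by (simp add: power2_eq_iff_nonneg)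
qed

lemma tight_frame_set_real_iff:
  "tight_frame_set_real TYPE('n::finite) k a \<longleftrightarrow> admissible_frame_norms CARD('n) k a"
proof
  assume "tight_frame_set_real TYPE('n) k a"
  then obtain f :: "nat \<Rightarrow> real^'n" and c where "0 < c"
    and frame: "\<forall>x. (\<Sum>i=1..k. (x \<bullet> f i)\<^sup>2) = c * (norm x)\<^sup>2" and norms: "\<forall>i\<in>{1..k}. norm (f i) = a i"
    unfolding tight_frame_set_real_def tight_frame_real_def by blast
  have frame': "\<forall>x::real^'n. (\<Sum>i=1..k. (norm (x \<bullet> f i))\<^sup>2) = c * (norm x)\<^sup>2"
    using frame by simp
  have parseval: "\<forall>y::real^'n. (norm y)\<^sup>2 = (\<Sum>b\<in>Basis. (norm (id b \<bullet> y))\<^sup>2)"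
  proof
    fix y :: "real^'n"
    show "(norm y)\<^sup>2 = (\<Sum>b\<in>Basis. (norm (id b \<bullet> y))\<^sup>2)"
      unfolding power2_norm_eq_inner[of y] euclidean_inner[of y y]
      by (simp add: power2_eq_square inner_commute)
  qed
  have self: "\<forall>y::real^'n. norm (y \<bullet> y) = (norm y)\<^sup>2"
    by (simp add: power2_norm_eq_inner)
  have "\<forall>b\<in>Basis. norm (id b :: real^'n) = 1" "card (Basis :: (real^'n) set) = CARD('n)"
    by simp_all
  then show "admissible_frame_norms CARD('n) k a"
    using admissible_frame_norms_if_tight[OF frame' \<open>0 < c\<close> parseval _ self _ _ norms] by simp
next
  assume "admissible_frame_norms CARD('n) k a"
  then obtain f :: "nat \<Rightarrow> real^'n" and c where "0 < c"
    "\<forall>x. (\<Sum>i=1..k. (x \<bullet> f i)\<^sup>2) = c * (norm x)\<^sup>2" "\<forall>i\<in>{1..k}. norm (f i) = a i"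
    using euclidean_tight_frame_with_norms_exists[where 'a = "real^'n", of "{1..k}" a] by (auto simp: admissible_frame_norms_def)
  then show "tight_frame_set_real TYPE('n) k a"
    unfolding tight_frame_set_real_def tight_frame_real_def by (metis norm_ge_zero)
qed

lemma tight_frame_set_complex_iff:
  "tight_frame_set_complex TYPE('n::finite) k a \<longleftrightarrow> admissible_frame_norms CARD('n) k a"
proof
  assume "tight_frame_set_complex TYPE('n) k a"
  then obtain f :: "nat \<Rightarrow> complex^'n" and c where "0 < c"
    and frame: "\<forall>x. (\<Sum>i=1..k. (cmod (cinner_vec x (f i)))\<^sup>2) = c * (norm x)\<^sup>2"
    and norms: "\<forall>i\<in>{1..k}. norm (f i) = a i"
    unfolding tight_frame_set_complex_def tight_frame_complex_def by blast
  have parseval: "\<forall>y::complex^'n. (norm y)\<^sup>2 = (\<Sum>l\<in>UNIV. (cmod (cinner_vec (axis l 1) y))\<^sup>2)"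
    by (simp add: norm_vec_sq cinner_vec_axis_left)
  have self: "\<forall>y::complex^'n. cmod (cinner_vec y y) = (norm y)\<^sup>2"
    unfolding cinner_vec_self norm_of_real by simp
  have "\<forall>l\<in>UNIV. norm (axis l 1 :: complex^'n) = 1"
    by (simp add: norm_axis)
  then show "admissible_frame_norms CARD('n) k a"
    using admissible_frame_norms_if_tight[OF frame \<open>0 < c\<close> parseval _ self _ _ norms] by simp
next
  assume "admissible_frame_norms CARD('n) k a"
  then obtain f :: "nat \<Rightarrow> real^'n" and c where "0 < c"
    and frame: "\<forall>x. (\<Sum>i=1..k. (x \<bullet> f i)\<^sup>2) = c * (norm x)\<^sup>2"
    and norms: "\<forall>i\<in>{1..k}. norm (f i) = a i"
    using euclidean_tight_frame_with_norms_exists[where 'a = "real^'n", of "{1..k}" a]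
    by (auto simp: admissible_frame_norms_def)
  define F where "F i = (\<chi> j. complex_of_real (f i $ j))" for i
  have "\<forall>x. (\<Sum>i=1..k. (cmod (cinner_vec x (F i)))\<^sup>2) = c * (norm x)\<^sup>2"
    using tight_frame_complex_of_real[OF frame] by (simp add: F_def)
  moreover have "\<forall>i\<in>{1..k}. norm (F i) = a i"
    using norms by (simp add: F_def norm_vec_complex_of_real)
  ultimately show "tight_frame_set_complex TYPE('n) k a"
    unfolding tight_frame_set_complex_def tight_frame_complex_def using \<open>0 < c\<close>
    by (metis norm_ge_zero)
qed

lemma admissible_frame_norms_tail_pos:
  assumes "2 \<le> n" "admissible_frame_norms n k a"
  shows "2 \<le> k" "0 < (\<Sum>i=2..k. (a i)\<^sup>2)"
proof -
  have "1 \<le> k" using assms(2) by (cases k) (auto simp: admissible_frame_norms_def)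
  then have split: "(\<Sum>i=1..k. (a i)\<^sup>2) = (a 1)\<^sup>2 + (\<Sum>i=2..k. (a i)\<^sup>2)"
    by (simp add: sum.atLeast_Suc_atMost numeral_2_eq_2)
  then have "real n * (a 1)\<^sup>2 \<le> (a 1)\<^sup>2 + (\<Sum>i=2..k. (a i)\<^sup>2)"
    using assms(2) \<open>1 \<le> k\<close> by (auto simp: admissible_frame_norms_def)
  \<comment> \<open>With \<open>n \<ge> 2\<close>, a vanishing tail would force \<open>a\<^sub>1 = 0\<close> and hence a zero total.\<close>
  moreover have "0 < (a 1)\<^sup>2 + (\<Sum>i=2..k. (a i)\<^sup>2)"
    using assms(2) split by (simp add: admissible_frame_norms_def)
  moreover have "0 \<le> (\<Sum>i=2..k. (a i)\<^sup>2)" by (simp add: sum_nonneg)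
  moreover have "(a 1)\<^sup>2 \<le> real n * (a 1)\<^sup>2 - (a 1)\<^sup>2"
    using assms(1) by (simp add: algebra_simps mult_right_mono)
  ultimately show pos: "0 < (\<Sum>i=2..k. (a i)\<^sup>2)" by linarith
  then show "2 \<le> k" by (cases "2 \<le> k") auto
qed

lemma admissible_frame_norms_fun_upd_1:
  fixes a :: "nat \<Rightarrow> real"
  assumes n: "2 \<le> n" and "0 \<le> b" and adm: "admissible_frame_norms n k a"
  shows "admissible_frame_norms n k (a(1 := b)) \<longleftrightarrow>
    b\<^sup>2 \<in> {real n * Max ((\<lambda>i. (a i)\<^sup>2) ` {2..k}) - (\<Sum>i=2..k. (a i)\<^sup>2) ..
           (\<Sum>i=2..k. (a i)\<^sup>2) / (real n - 1)}"
proof -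
  define T where "T = (\<Sum>i=2..k. (a i)\<^sup>2)"
  define M where "M = Max ((\<lambda>i. (a i)\<^sup>2) ` {2..k})"
  have "2 \<le> k" and "0 < T" using admissible_frame_norms_tail_pos[OF n adm] by (simp_all add: T_def)
  have sum_b: "(\<Sum>i=1..k. ((a(1 := b)) i)\<^sup>2) = b\<^sup>2 + T"
    using \<open>2 \<le> k\<close> by (simp add: T_def sum.atLeast_Suc_atMost numeral_2_eq_2)
  have "{1..k} = insert 1 {2..k}" using \<open>2 \<le> k\<close> by auto
  then have "admissible_frame_norms n k (a(1 := b)) \<longleftrightarrow>
      real n * b\<^sup>2 \<le> b\<^sup>2 + T \<and> (\<forall>i\<in>{2..k}. real n * (a i)\<^sup>2 \<le> b\<^sup>2 + T)"
    using adm \<open>0 \<le> b\<close> \<open>0 < T\<close> sum_b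
    by (auto simp: admissible_frame_norms_def add_nonneg_pos)
  also have "real n * b\<^sup>2 \<le> b\<^sup>2 + T \<longleftrightarrow> b\<^sup>2 \<le> T / (real n - 1)"
    using n by (simp add: le_divide_eq algebra_simps)
  also have "(\<forall>i\<in>{2..k}. real n * (a i)\<^sup>2 \<le> b\<^sup>2 + T) \<longleftrightarrow> real n * M - T \<le> b\<^sup>2"
  proof -
    have "finite ((\<lambda>i. (a i)\<^sup>2) ` {2..k})" "(\<lambda>i. (a i)\<^sup>2) ` {2..k} \<noteq> {}" using \<open>2 \<le> k\<close> by auto
    then have "(\<forall>i\<in>{2..k}. (a i)\<^sup>2 \<le> (b\<^sup>2 + T) / real n) \<longleftrightarrow> M \<le> (b\<^sup>2 + T) / real n"
      unfolding M_def by (simp add: Max_le_iff)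
    then show ?thesis using n by (simp add: le_divide_eq mult.commute algebra_simps)
  qed
  finally show ?thesis unfolding atLeastAtMost_iff T_def M_def by blast
qed

theorem theorem4p2:
  fixes a :: "nat \<Rightarrow> real" and b :: real and k :: nat
  assumes "2 \<le> CARD('n::finite)"
    and "0 \<le> b"
  shows
   "(tight_frame_set_real TYPE('n) k a \<longrightarrow>
      (tight_frame_set_real TYPE('n) k (a(1 := b)) \<longleftrightarrow>
        b\<^sup>2 \<in> {real CARD('n) * Max ((\<lambda>i. (a i)\<^sup>2) ` {2..k}) - (\<Sum>i=2..k. (a i)\<^sup>2) ..
               (\<Sum>i=2..k. (a i)\<^sup>2) / (real CARD('n) - 1)}))
  \<and> (tight_frame_set_complex TYPE('n) k a \<longrightarrow>
      (tight_frame_set_complex TYPE('n) k (a(1 := b)) \<longleftrightarrow>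
        b\<^sup>2 \<in> {real CARD('n) * Max ((\<lambda>i. (a i)\<^sup>2) ` {2..k}) - (\<Sum>i=2..k. (a i)\<^sup>2) ..
               (\<Sum>i=2..k. (a i)\<^sup>2) / (real CARD('n) - 1)}))"
  unfolding tight_frame_set_real_iff tight_frame_set_complex_iff
  using admissible_frame_norms_fun_upd_1[OF assms] by blast

end
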